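(* Fix an integer $s_y\ge 0$. For each integer $t\ge1$ let $A_t$ be the set $I_1\cup I_2\cup I_3\cup T\cup S$ where $Y=[0,s_y]$, $a=4s_y+3$, $I_1=[0,t]\times Y$, $T=[0,(t),at^2-t]\times\{0\}$, $S=[at^2,(t+1),(a+1)t^2-1]\times Y$, $I_2=[2at^2,2at^2+t]\times Y$, $I_3=[(3a+1)t^2,(3a+1)t^2+t]\times Y$. Then $A_t$ is a planar additive basis for $[0,(16s_y+14)t^2-1]\times[0,s_y]$, and its efficiency $c_t=\dfrac{(16s_y+14)t^2(s_y+1)}{|A_t|^2}$ satisfies $$\lim_{t\to\infty}c_t=\frac{2s_y+2}{8s_y+7}.$$
   Context: For integers $a\le b$, $[a,b]$ denotes $\{a,\dots,b\}$. For integers $a\le b$ and $t\ge1$ with $t\mid b-a$, $[a,(t),b]=\{a,a+t,\dots,b\}$. A planar additive basis for $[0,s_x]\times[0,s_y]$ is a set $A$ of points with non-negative integer coordinates with $A+A\supseteq[0,s_x]\times[0,s_y]$ ($A+A$ the vector sumset, summands may coincide); its efficiency is $(s_x+1)(s_y+1)/|A|^2$. *)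

theory Defs
  imports "HOL-Analysis.Analysis"
begin

text \<open>Arithmetic progression [a,(t),b] = {a, a+t, ..., b} (with t >= 1, t dvd b - a).\<close>
definition step_interval :: "nat \<Rightarrow> nat \<Rightarrow> nat \<Rightarrow> nat set" where
  "step_interval a t b = {x. a \<le> x \<and> x \<le> b \<and> t dvd (x - a)}"

definition sumset2 :: "(nat \<times> nat) set \<Rightarrow> (nat \<times> nat) set" where
  "sumset2 A = {(fst p + fst q, snd p + snd q) | p q. p \<in> A \<and> q \<in> A}"

definition planar_basis :: "(nat \<times> nat) set \<Rightarrow> nat \<Rightarrow> nat \<Rightarrow> bool" where
  "planar_basis A sx sy \<longleftrightarrow> {0..sx} \<times> {0..sy} \<subseteq> sumset2 A"

definition efficiency :: "(nat \<times> nat) set \<Rightarrow> nat \<Rightarrow> nat \<Rightarrow> real" where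
  "efficiency A sx sy = real ((sx + 1) * (sy + 1)) / real (card A) ^ 2"

definition A_t :: "nat \<Rightarrow> nat \<Rightarrow> (nat \<times> nat) set" where
  "A_t sy t = (let Y = {0..sy}; a = 4 * sy + 3;
      I1 = {0..t} \<times> Y;
      T = step_interval 0 t (a * t^2 - t) \<times> {0};
      S = step_interval (a * t^2) (t + 1) ((a + 1) * t^2 - 1) \<times> Y;
      I2 = {2 * a * t^2 .. 2 * a * t^2 + t} \<times> Y;
      I3 = {(3 * a + 1) * t^2 .. (3 * a + 1) * t^2 + t} \<times> Y
    in I1 \<union> I2 \<union> I3 \<union> T \<union> S)"

end

theory Submission
  imports Defs
begin

text \<open>Write \<open>a = 4s\<^sub>y + 3\<close> and \<open>N = at\<^sup>2\<close>. Apart from \<open>T\<close>, which lies on the x-axis, every block of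
  \<open>A\<^sub>t\<close> carries the full column \<open>[0,s\<^sub>y]\<close>, so the second coordinate takes care of itself and it suffices
  to write every \<open>x < (4a+2)t\<^sup>2\<close> as a sum of two abscissae, at least one of them from a full column.
  Division with remainder shows that \<open>I\<^sub>1 + T\<close> covers \<open>[0,N]\<close>, that \<open>I\<^sub>1 + S\<close> covers
  \<open>[N, N+t(t+1))\<close> and that \<open>S + T\<close> covers \<open>[N+t\<^sup>2-t, 2N)\<close>; shifting by the offsets of \<open>I\<^sub>2\<close> and
  \<open>I\<^sub>3\<close>, the sets \<open>I\<^sub>2 + T\<close>, \<open>I\<^sub>2 + S\<close>, \<open>I\<^sub>3 + T\<close>, \<open>I\<^sub>3 + S\<close> cover the rest of \<open>[0,(4a+2)t\<^sup>2)\<close>.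
  The blocks are pairwise disjoint except that \<open>T\<close> meets \<open>I\<^sub>1\<close> in two points, whence
  \<open>|A\<^sub>t| = (8s\<^sub>y+7)t + 3s\<^sub>y + 1\<close>; the efficiency is thus a ratio of two quadratics in \<open>t\<close>, and the limit
  is the ratio of their leading coefficients.\<close>

lemma step_interval_eq_image:
  fixes c d n :: nat
  assumes "d \<ge> 1" "n \<ge> 1"
  shows "step_interval c d (c + n * d - d) = (\<lambda>k. c + k * d) ` {..<n}"
proof (intro set_eqI iffI)
  fix x assume "x \<in> step_interval c d (c + n * d - d)"
  then have le: "c \<le> x" "x \<le> c + n * d - d" and "d dvd (x - c)"
    unfolding step_interval_def by auto
  then obtain k where k: "x = c + k * d" by (metis dvdE le_add_diff_inverse mult.commute)
  have "k * d \<le> (n - 1) * d" using le(2) k assms by (simp add: diff_mult_distrib)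
  then have "k < n" using assms by simp
  then show "x \<in> (\<lambda>k. c + k * d) ` {..<n}" using k by auto
next
  fix x assume "x \<in> (\<lambda>k. c + k * d) ` {..<n}"
  then obtain k where k: "x = c + k * d" "k < n" by auto
  then have "k * d + d \<le> n * d" by (metis add.commute mult_Suc mult_le_mono1 Suc_leI)
  then show "x \<in> step_interval c d (c + n * d - d)"
    using k unfolding step_interval_def by auto
qed

lemma interval_plus_multiples:
  fixes m n t :: nat
  assumes "n \<ge> 1" "m \<le> n * t"
  obtains r j where "r \<le> t" "j < n" "m = r + j * t"
proof (cases "m = n * t")
  case True
  with assms(1) show ?thesis by (intro that[of t "n - 1"]) (auto simp: diff_mult_distrib)
next
  case False
  with assms(2) have "m < n * t" by simp
  then have "t > 0" by (cases t) auto
  show ?thesis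
  proof (rule that)
    show "m mod t \<le> t" using \<open>t > 0\<close> by (simp add: less_imp_le)
    show "m div t < n" using \<open>m < n * t\<close> by (simp add: less_mult_imp_div_less)
  qed (rule mod_div_mult_eq[symmetric])
qed

lemma interval_plus_progression:
  fixes m n t :: nat
  assumes "m < n * (t + 1)"
  obtains r k where "r \<le> t" "k < n" "m = r + k * (t + 1)"
proof (rule that)
  show "m mod (t + 1) \<le> t" by (simp add: less_Suc_eq_le)
  show "m div (t + 1) < n" using assms by (simp add: less_mult_imp_div_less)
qed (rule mod_div_mult_eq[symmetric])

lemma progression_plus_multiples:
  fixes m n t :: nat
  assumes "(t - 1) * t \<le> m" "m < n * t"
  obtains k j where "k < t" "j < n" "m = k * (t + 1) + j * t"
proof -
  have t: "t \<ge> 1" using assms by (cases t) auto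
  define q where "q = m div t"
  define k where "k = m mod t"
  have m: "m = q * t + k" unfolding q_def k_def by simp
  have "k < t" unfolding k_def using t by simp
  have "t - 1 \<le> q" using div_le_mono[OF assms(1), of t] t unfolding q_def by simp
  with \<open>k < t\<close> have "k \<le> q" by linarith
  have "q < n" unfolding q_def using assms(2) by (simp add: less_mult_imp_div_less)
  have "m = k * (t + 1) + (q - k) * t"
    using m \<open>k \<le> q\<close> by (simp add: algebra_simps diff_mult_distrib)
  with \<open>k < t\<close> \<open>q < n\<close> show ?thesis by (intro that[of k "q - k"]) auto
qed

lemma card_Un_ordered:
  fixes A B :: "'a::linorder set"
  assumes "finite A" "finite B" "\<And>x y. x \<in> A \<Longrightarrow> y \<in> B \<Longrightarrow> x < y"
  shows "card (A \<union> B) = card A + card B"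
  using assms by (intro card_Un_disjoint) force+

lemma tendsto_quadratic_ratio:
  fixes b c d :: real
  assumes "c \<noteq> 0"
  shows "(\<lambda>n. b * real n ^ 2 / (c * real n + d) ^ 2) \<longlonglongrightarrow> b / c ^ 2"
proof -
  have "(\<lambda>n. b / (c + d / real n) ^ 2) \<longlonglongrightarrow> b / (c + 0) ^ 2"
    using assms by (intro tendsto_intros) auto
  moreover have "\<forall>\<^sub>F n in sequentially. b / (c + d / real n) ^ 2 = b * real n ^ 2 / (c * real n + d) ^ 2"
    unfolding eventually_sequentially
  proof (intro exI allI impI)
    fix n :: nat assume "n \<ge> 1"
    then have "c + d / real n = (c * real n + d) / real n" by (simp add: field_simps)
    then show "b / (c + d / real n) ^ 2 = b * real n ^ 2 / (c * real n + d) ^ 2"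
      by (simp add: power_divide)
  qed
  ultimately show ?thesis by (simp add: tendsto_cong)
qed

lemma planar_basis_if_columns_cover:
  fixes C R :: "nat set" and A :: "(nat \<times> nat) set"
  assumes "C \<times> {0..h} \<union> R \<times> {0} \<subseteq> A"
    and "\<And>x. x \<le> s \<Longrightarrow> \<exists>u\<in>C. \<exists>v\<in>C \<union> R. x = u + v"
  shows "planar_basis A s h"
  unfolding planar_basis_def
proof (intro subsetI, elim SigmaE)
  fix p x y assume "x \<in> {0..s}" "y \<in> {0..h}" "p = (x, y)"
  moreover obtain u v where "u \<in> C" "v \<in> C \<union> R" "x = u + v"
    using assms(2)[of x] \<open>x \<in> {0..s}\<close> by auto
  ultimately have "(u, y) \<in> A" "(v, 0) \<in> A" using assms(1) by auto
  then show "p \<in> sumset2 A"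
    unfolding sumset2_def using \<open>p = (x, y)\<close> \<open>x = u + v\<close> by force
qed

text \<open>The abscissae of the blocks \<open>I\<^sub>1\<close>, \<open>S\<close>, \<open>I\<^sub>2\<close>, \<open>I\<^sub>3\<close>, which carry the whole column
  \<open>[0,s\<^sub>y]\<close>, and of the block \<open>T\<close>, which lies on the x-axis; \<open>a\<close> stands for \<open>4s\<^sub>y+3\<close>.\<close>

definition progression_block :: "nat \<Rightarrow> nat \<Rightarrow> nat set" where
  "progression_block a t = (\<lambda>k. a * t^2 + k * (t + 1)) ` {..<t}"

definition full_columns :: "nat \<Rightarrow> nat \<Rightarrow> nat set" where
  "full_columns a t = {0..t} \<union> progression_block a t
     \<union> {2 * a * t^2 .. 2 * a * t^2 + t} \<union> {(3 * a + 1) * t^2 .. (3 * a + 1) * t^2 + t}"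

definition base_row :: "nat \<Rightarrow> nat \<Rightarrow> nat set" where
  "base_row a t = (\<lambda>j. j * t) ` {..<a * t}"

lemma A_t_eq:
  assumes "t \<ge> 1"
  shows "A_t sy t = full_columns (4 * sy + 3) t \<times> {0..sy} \<union> base_row (4 * sy + 3) t \<times> {0}"
proof -
  define a where "a = 4 * sy + 3"
  have at: "a * t \<ge> 1" using assms by (simp add: a_def)
  have "a * t^2 - t = 0 + (a * t) * t - t" by (simp add: power2_eq_square)
  then have row: "step_interval 0 t (a * t^2 - t) = base_row a t"
    using step_interval_eq_image[of t "a * t" 0] assms at by (simp add: base_row_def)
  have "(a + 1) * t^2 - 1 = a * t^2 + t * (t + 1) - (t + 1)"
    by (simp add: algebra_simps power2_eq_square)
  then have block: "step_interval (a * t^2) (t + 1) ((a + 1) * t^2 - 1) = progression_block a t"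
    using step_interval_eq_image[of "t + 1" t "a * t^2"] assms by (simp add: progression_block_def)
  show ?thesis
    unfolding A_t_def Let_def a_def[symmetric] full_columns_def row block by blast
qed

lemma interval_plus_row_or_block:
  assumes "a \<ge> 1" "t \<ge> 1" "y < a * t^2 + t * (t + 1)"
  obtains r v where "r \<le> t" "v \<in> base_row a t \<union> progression_block a t" "y = r + v"
proof (cases "y \<le> a * t^2")
  case True
  then have "y \<le> (a * t) * t" by (simp add: power2_eq_square)
  moreover have "a * t \<ge> 1" using assms by simp
  ultimately obtain r j where "r \<le> t" "j < a * t" "y = r + j * t"
    using interval_plus_multiples by blast
  then show ?thesis using that unfolding base_row_def by blast
next
  case False
  then have "y - a * t^2 < t * (t + 1)" using assms(3) by linarith
  then obtain r k where "r \<le> t" "k < t" "y - a * t^2 = r + k * (t + 1)"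
    using interval_plus_progression by blast
  with False show ?thesis
    using that[of r "a * t^2 + k * (t + 1)"] unfolding progression_block_def by auto
qed

lemma block_plus_row:
  assumes "a * t^2 + (t - 1) * t \<le> y" "y < 2 * a * t^2"
  obtains s v where "s \<in> progression_block a t" "v \<in> base_row a t" "y = s + v"
proof -
  have "2 * a * t^2 = a * t^2 + (a * t) * t" by (simp add: power2_eq_square)
  then have "(t - 1) * t \<le> y - a * t^2" "y - a * t^2 < (a * t) * t" using assms by linarith+
  then obtain k j where "k < t" "j < a * t" "y - a * t^2 = k * (t + 1) + j * t"
    using progression_plus_multiples by blast
  with assms show ?thesis using that[of "a * t^2 + k * (t + 1)" "j * t"]
    unfolding progression_block_def base_row_def by auto
qed

lemma full_columns_cover:
  assumes "a \<ge> 1" "t \<ge> 1" "x < (4 * a + 2) * t^2"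
  obtains u v where "u \<in> full_columns a t" "v \<in> full_columns a t \<union> base_row a t" "x = u + v"
proof -
  define N where "N = a * t^2"
  have N: "(4 * a + 2) * t^2 = 4 * N + 2 * t^2" "(3 * a + 1) * t^2 = 3 * N + t^2"
    by (simp_all add: N_def algebra_simps)
  have sq: "t * (t + 1) = t^2 + t" "(t - 1) * t + t = t^2"
    using assms(2) by (simp_all add: power2_eq_square algebra_simps diff_mult_distrib)
  have shifts: "r \<in> full_columns a t" "2 * N + r \<in> full_columns a t" "3 * N + t^2 + r \<in> full_columns a t"
    if "r \<le> t" for r
    using that N unfolding full_columns_def N_def by auto
  have block: "progression_block a t \<subseteq> full_columns a t" unfolding full_columns_def by blast
  have short: "\<exists>r\<le>t. \<exists>v\<in>full_columns a t \<union> base_row a t. y = r + v"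
    if "y < N + t * (t + 1)" for y
  proof -
    from that obtain r v where "r \<le> t" "v \<in> base_row a t \<union> progression_block a t" "y = r + v"
      unfolding N_def by (rule interval_plus_row_or_block[OF assms(1,2)])
    with block show ?thesis by blast
  qed
  consider "x < N + t * (t + 1)" | "N + (t - 1) * t \<le> x" "x < 2 * N"
    | "2 * N \<le> x" "x < 3 * N + t * (t + 1)" | "3 * N + t^2 \<le> x"
    using sq by linarith
  then show ?thesis
  proof cases
    case 1
    then obtain r v where "r \<le> t" "v \<in> full_columns a t \<union> base_row a t" "x = r + v"
      using short by blast
    then show ?thesis using shifts(1) by (intro that) auto
  next
    case 2
    then have "a * t^2 + (t - 1) * t \<le> x" "x < 2 * a * t^2" unfolding N_def by simp_all
    then obtain s v where "s \<in> progression_block a t" "v \<in> base_row a t" "x = s + v"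
      by (rule block_plus_row)
    then show ?thesis using block by (intro that) auto
  next
    case 3
    then have "x - 2 * N < N + t * (t + 1)" by linarith
    then obtain r v where "r \<le> t" "v \<in> full_columns a t \<union> base_row a t" "x - 2 * N = r + v"
      using short by blast
    with 3 show ?thesis using shifts(2) by (intro that[of "2 * N + r" v]) auto
  next
    case 4
    with assms(3) N sq have "x - (3 * N + t^2) < N + t * (t + 1)" by linarith
    then obtain r v where "r \<le> t" "v \<in> full_columns a t \<union> base_row a t" "x - (3 * N + t^2) = r + v"
      using short by blast
    with 4 show ?thesis using shifts(3) by (intro that[of "3 * N + t^2 + r" v]) auto
  qed
qed

lemma planar_basis_A_t:
  assumes "t \<ge> 1"
  shows "planar_basis (A_t sy t) ((16 * sy + 14) * t^2 - 1) sy"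
proof (rule planar_basis_if_columns_cover)
  let ?C = "full_columns (4 * sy + 3) t" and ?R = "base_row (4 * sy + 3) t"
  show "?C \<times> {0..sy} \<union> ?R \<times> {0} \<subseteq> A_t sy t"
    using A_t_eq[OF assms] by simp
  fix x assume "x \<le> (16 * sy + 14) * t^2 - 1"
  moreover have "(16 * sy + 14) * t^2 \<ge> 1" using assms by simp
  ultimately have "x < (16 * sy + 14) * t^2" by linarith
  then have "x < (4 * (4 * sy + 3) + 2) * t^2" by (simp add: add.commute)
  then obtain u v where "u \<in> ?C" "v \<in> ?C \<union> ?R" "x = u + v"
    using full_columns_cover[of "4 * sy + 3" t x] assms by auto
  then show "\<exists>u\<in>?C. \<exists>v\<in>?C \<union> ?R. x = u + v" by blast
qed

lemma card_full_columns:
  assumes "a \<ge> 2" "t \<ge> 1"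
  shows "card (full_columns a t) = 4 * t + 3"
proof -
  let ?S = "progression_block a t"
  have "2 * 1 \<le> a * t" using assms by (intro mult_le_mono) auto
  then have "2 * t \<le> (a * t) * t" by (intro mult_right_mono) auto
  then have t_less: "t < a * t^2" using assms by (simp add: power2_eq_square mult.assoc)
  have S_bounds: "a * t^2 \<le> y \<and> y < 2 * a * t^2" if "y \<in> ?S" for y
  proof -
    obtain k where k: "k < t" "y = a * t^2 + k * (t + 1)"
      using \<open>y \<in> ?S\<close> unfolding progression_block_def by auto
    have "(k + 1) * (t + 1) \<le> t * (t + 1)" using k by (intro mult_right_mono) auto
    then have "k * (t + 1) < t^2" by (simp add: power2_eq_square algebra_simps)
    moreover have "t^2 \<le> a * t^2" using assms by simp
    ultimately show ?thesis using k by linarith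
  qed
  have "finite ?S" unfolding progression_block_def by simp
  have "inj_on (\<lambda>k. a * t^2 + k * (t + 1)) {..<t}"
    by (rule inj_onI) (simp only: add_left_cancel mult_cancel2, simp)
  then have "card ?S = t" unfolding progression_block_def by (simp add: card_image)
  moreover have "card ({0..t} \<union> ?S) = card {0..t} + card ?S"
    using \<open>finite ?S\<close> t_less S_bounds by (intro card_Un_ordered) fastforce+
  moreover have "card ({0..t} \<union> ?S \<union> {2 * a * t^2 .. 2 * a * t^2 + t})
      = card ({0..t} \<union> ?S) + card {2 * a * t^2 .. 2 * a * t^2 + t}"
    using \<open>finite ?S\<close> t_less S_bounds by (intro card_Un_ordered) fastforce+
  moreover have "card (full_columns a t)
      = card ({0..t} \<union> ?S \<union> {2 * a * t^2 .. 2 * a * t^2 + t})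
        + card {(3 * a + 1) * t^2 .. (3 * a + 1) * t^2 + t}"
    unfolding full_columns_def using \<open>finite ?S\<close> t_less S_bounds
    by (intro card_Un_ordered) (fastforce simp: algebra_simps)+
  ultimately show ?thesis by simp
qed

lemma card_base_row:
  assumes "t \<ge> 1"
  shows "card (base_row a t) = a * t"
  unfolding base_row_def using assms by (simp add: card_image inj_on_def)

lemma full_columns_Int_base_row:
  assumes "a \<ge> 2" "t \<ge> 1"
  shows "full_columns a t \<inter> base_row a t = {0, t}"
proof
  have "2 * 1 \<le> a * t" using assms by (intro mult_le_mono) auto
  then have "0 \<in> {..<a * t}" "1 \<in> {..<a * t}" unfolding lessThan_iff by linarith+
  then have "(\<lambda>j. j * t) 0 \<in> base_row a t" "(\<lambda>j. j * t) 1 \<in> base_row a t"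
    unfolding base_row_def by blast+
  then show "{0, t} \<subseteq> full_columns a t \<inter> base_row a t"
    unfolding full_columns_def by auto
next
  show "full_columns a t \<inter> base_row a t \<subseteq> {0, t}"
  proof
    fix y assume y: "y \<in> full_columns a t \<inter> base_row a t"
    then obtain j where j: "j < a * t" "y = j * t" unfolding base_row_def by auto
    then have "y < a * t^2" using assms by (simp add: power2_eq_square)
    with y have "y \<le> 1 * t" unfolding full_columns_def progression_block_def by (auto simp: algebra_simps)
    with j have "j * t \<le> 1 * t" by simp
    then have "j \<le> 1" using assms(2) by simp
    with j show "y \<in> {0, t}" by (auto simp: le_Suc_eq)
  qed
qed

lemma card_A_t:
  assumes "t \<ge> 1"
  shows "card (A_t sy t) = (8 * sy + 7) * t + 3 * sy + 1"
proof -
  define a where "a = 4 * sy + 3"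
  let ?C = "full_columns a t \<times> {0..sy}" and ?R = "base_row a t \<times> {0::nat}"
  have "?C \<inter> ?R = {0, t} \<times> {0}"
    using full_columns_Int_base_row[of a t] assms by (simp add: a_def Times_Int_Times)
  then have "card (?C \<inter> ?R) = 2" using assms by simp
  moreover have "card ?C = (4 * t + 3) * (sy + 1)" "card ?R = a * t"
    using card_full_columns[of a t] card_base_row[of t a] assms
    by (simp_all add: a_def card_cartesian_product)
  moreover have "card ?C + card ?R = card (?C \<union> ?R) + card (?C \<inter> ?R)"
    unfolding full_columns_def progression_block_def base_row_def by (intro card_Un_Int) auto
  ultimately have "card (?C \<union> ?R) + 2 = (4 * t + 3) * (sy + 1) + (4 * sy + 3) * t"
    by (simp add: a_def)
  then show ?thesis
    unfolding A_t_eq[OF assms] a_def[symmetric] by (simp add: a_def algebra_simps)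
qed

lemma efficiency_A_t:
  assumes "t \<ge> 1"
  shows "efficiency (A_t sy t) ((16 * sy + 14) * t^2 - 1) sy
    = real ((16 * sy + 14) * t^2 * (sy + 1)) / real (card (A_t sy t)) ^ 2"
proof -
  have "(16 * sy + 14) * t^2 \<ge> 1" using assms by simp
  then have "(16 * sy + 14) * t^2 - 1 + 1 = (16 * sy + 14) * t^2" by (rule le_add_diff_inverse2)
  then show ?thesis unfolding efficiency_def by (simp only:)
qed

lemma efficiency_A_t_tendsto:
  "(\<lambda>t. efficiency (A_t sy t) ((16 * sy + 14) * t^2 - 1) sy)
     \<longlonglongrightarrow> (2 * real sy + 2) / (8 * real sy + 7)"
proof -
  define b where "b = real ((16 * sy + 14) * (sy + 1))"
  define c where "c = real (8 * sy + 7)"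
  define d where "d = real (3 * sy + 1)"
  have "(\<lambda>t. b * real t ^ 2 / (c * real t + d) ^ 2) \<longlonglongrightarrow> b / c ^ 2"
    by (rule tendsto_quadratic_ratio) (simp add: c_def)
  moreover have "\<forall>\<^sub>F t in sequentially.
      b * real t ^ 2 / (c * real t + d) ^ 2 = efficiency (A_t sy t) ((16 * sy + 14) * t^2 - 1) sy"
    unfolding eventually_sequentially
  proof (intro exI[of _ 1] allI impI)
    fix t :: nat assume "t \<ge> 1"
    then show "b * real t ^ 2 / (c * real t + d) ^ 2
        = efficiency (A_t sy t) ((16 * sy + 14) * t^2 - 1) sy"
      unfolding efficiency_A_t[OF \<open>t \<ge> 1\<close>] card_A_t[OF \<open>t \<ge> 1\<close>]
      by (simp add: b_def c_def d_def algebra_simps)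
  qed
  moreover have "b / c ^ 2 = (2 * real sy + 2) / (8 * real sy + 7)"
  proof -
    have "b = 2 * (real sy + 1) * c" "c > 0" unfolding b_def c_def by (simp_all add: algebra_simps)
    then have "b / c ^ 2 = 2 * (real sy + 1) / c" by (simp add: power2_eq_square)
    then show ?thesis unfolding c_def by (simp add: algebra_simps)
  qed
  ultimately show ?thesis by (simp add: tendsto_cong)
qed

theorem mainTheorem14:
  fixes sy :: nat
  shows "(\<forall>t\<ge>1. planar_basis (A_t sy t) ((16 * sy + 14) * t^2 - 1) sy)
    \<and> (\<forall>t\<ge>1. efficiency (A_t sy t) ((16 * sy + 14) * t^2 - 1) sy
          = real ((16 * sy + 14) * t^2 * (sy + 1)) / real (card (A_t sy t)) ^ 2)
    \<and> ((\<lambda>t. efficiency (A_t sy t) ((16 * sy + 14) * t^2 - 1) sy)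
          \<longlonglongrightarrow> (2 * real sy + 2) / (8 * real sy + 7))"
  using planar_basis_A_t efficiency_A_t efficiency_A_t_tendsto by blast

end
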